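(* Let $(G,\Omega)$ be an ample transitive $\ell$-permutation group. Then $T$ has a minimal element $\Delta$ with $(G(\Delta),\pi(\Delta))$ of type (I) if and only if there is $h_1\in G$, $h_1>1$, such that $[a,b]=1$ for all $a,b\in G$ with $|a|\vee|b|\leqslant h_1$.
   Context: An $\ell$-permutation group $(G,\Omega)$: a totally ordered set $\Omega$ with a subgroup $G$ of $\mathrm{Aut}(\Omega,\leqslant)$ (right action) closed under pointwise max and min; transitive if $G$ is transitive on $\Omega$. $|g|=g\vee g^{-1}$; $g\le h$ is the pointwise order. A convex congruence is a $G$-invariant equivalence relation with convex classes. For $\alpha\neq\beta$, $V(\alpha,\beta)$ (resp. $U(\alpha,\beta)$) is the intersection (resp. union) of all convex congruences in which $\alpha,\beta$ lie in the same (resp. different) classes. $T$ is the set of all classes of the congruences $V(\alpha,\beta)$, partially ordered by inclusion; for $\Delta\in T$, $\kappa(\Delta)=V(\alpha,\beta)$ is the congruence having $\Delta$ as a class and $\pi(\Delta)$ is the set of $U(\alpha,\beta)$-classes inside $\Delta$, ordered by $\Omega$. $\mathrm{st}(\Delta)=\{g:\Delta g=\Delta\}$, $\mathrm{rst}(\Delta)=\{g:\mathrm{supp}(g)\subseteq\Delta\}$, $Q_\Delta=\{h\in\mathrm{rst}(\Delta):\exists\alpha\in\Delta,\ V(\alpha,\alpha h)=\kappa(\Delta)\}$; ample means $Q_\Delta\ne\emptyset$ for all $\Delta$. $G(\Delta)$ is the group of permutations of $\pi(\Delta)$ induced by $\mathrm{st}(\Delta)$; it is transitive and o-primitive. A transitive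 o-primitive $\ell$-permutation group is of type (I) if the ordered set is order-isomorphic to a subgroup of $\mathbb R$ and the group acts as its right regular representation (equivalently, the group is abelian). *)

theory Defs
  imports Main "HOL-Library.FuncSet" Complex_Main
begin

text \<open>The totally ordered set Omega is the whole type 'a (class linorder).
  Group elements are functions 'a => 'a; the (right) action of g on alpha is g alpha.\<close>

definition order_aut :: "('a::linorder \<Rightarrow> 'a) \<Rightarrow> bool" where
  "order_aut f \<longleftrightarrow> bij f \<and> (\<forall>x y. x \<le> y \<longleftrightarrow> f x \<le> f y)"

definition l_perm_group :: "('a::linorder \<Rightarrow> 'a) set \<Rightarrow> bool" where
  "l_perm_group G \<longleftrightarrow>
     (\<forall>g\<in>G. order_aut g) \<and> id \<in> G \<and>
     (\<forall>f\<in>G. \<forall>g\<in>G. f \<circ> g \<in> G) \<and> (\<forall>g\<in>G. inv g \<in> G) \<and>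
     (\<forall>f\<in>G. \<forall>g\<in>G. (\<lambda>x. max (f x) (g x)) \<in> G \<and> (\<lambda>x. min (f x) (g x)) \<in> G)"

definition transitive_grp :: "('a \<Rightarrow> 'a) set \<Rightarrow> bool" where
  "transitive_grp G \<longleftrightarrow> (\<forall>\<alpha> \<beta>. \<exists>g\<in>G. g \<alpha> = \<beta>)"

definition pw_le :: "('a::linorder \<Rightarrow> 'a) \<Rightarrow> ('a \<Rightarrow> 'a) \<Rightarrow> bool" where
  "pw_le f g \<longleftrightarrow> (\<forall>x. f x \<le> g x)"

definition pw_abs :: "('a::linorder \<Rightarrow> 'a) \<Rightarrow> ('a \<Rightarrow> 'a)" where
  "pw_abs g = (\<lambda>x. max (g x) (inv g x))"

definition pw_join :: "('a::linorder \<Rightarrow> 'a) \<Rightarrow> ('a \<Rightarrow> 'a) \<Rightarrow> ('a \<Rightarrow> 'a)" where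
  "pw_join f g = (\<lambda>x. max (f x) (g x))"

definition convex_congruence :: "('a::linorder \<Rightarrow> 'a) set \<Rightarrow> ('a \<times> 'a) set \<Rightarrow> bool" where
  "convex_congruence G R \<longleftrightarrow> equiv UNIV R \<and>
     (\<forall>g\<in>G. \<forall>x y. (x, y) \<in> R \<longrightarrow> (g x, g y) \<in> R) \<and>
     (\<forall>x y z. (x, y) \<in> R \<and> x \<le> z \<and> z \<le> y \<longrightarrow> (x, z) \<in> R)"

definition Vcong :: "('a::linorder \<Rightarrow> 'a) set \<Rightarrow> 'a \<Rightarrow> 'a \<Rightarrow> ('a \<times> 'a) set" where
  "Vcong G \<alpha> \<beta> = \<Inter> {R. convex_congruence G R \<and> (\<alpha>, \<beta>) \<in> R}"

definition Ucong :: "('a::linorder \<Rightarrow> 'a) set \<Rightarrow> 'a \<Rightarrow> 'a \<Rightarrow> ('a \<times> 'a) set" where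
  "Ucong G \<alpha> \<beta> = \<Union> {R. convex_congruence G R \<and> (\<alpha>, \<beta>) \<notin> R}"

definition Tset :: "('a::linorder \<Rightarrow> 'a) set \<Rightarrow> 'a set set" where
  "Tset G = {Vcong G \<alpha> \<beta> `` {\<gamma>} | \<alpha> \<beta> \<gamma>. \<alpha> \<noteq> \<beta>}"

definition wpair :: "('a::linorder \<Rightarrow> 'a) set \<Rightarrow> 'a set \<Rightarrow> 'a \<times> 'a" where
  "wpair G \<Delta> = (SOME p. fst p \<noteq> snd p \<and> \<Delta> \<in> UNIV // Vcong G (fst p) (snd p))"

definition kappa :: "('a::linorder \<Rightarrow> 'a) set \<Rightarrow> 'a set \<Rightarrow> ('a \<times> 'a) set" where
  "kappa G \<Delta> = Vcong G (fst (wpair G \<Delta>)) (snd (wpair G \<Delta>))"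

definition piset :: "('a::linorder \<Rightarrow> 'a) set \<Rightarrow> 'a set \<Rightarrow> 'a set set" where
  "piset G \<Delta> = {C \<in> UNIV // Ucong G (fst (wpair G \<Delta>)) (snd (wpair G \<Delta>)). C \<subseteq> \<Delta>}"

definition set_less :: "'a::linorder set \<Rightarrow> 'a set \<Rightarrow> bool" where
  "set_less C D \<longleftrightarrow> C \<noteq> D \<and> (\<forall>x\<in>C. \<forall>y\<in>D. x < y)"

definition stab :: "('a \<Rightarrow> 'a) set \<Rightarrow> 'a set \<Rightarrow> ('a \<Rightarrow> 'a) set" where
  "stab G \<Delta> = {g \<in> G. g ` \<Delta> = \<Delta>}"

definition rstab :: "('a \<Rightarrow> 'a) set \<Rightarrow> 'a set \<Rightarrow> ('a \<Rightarrow> 'a) set" where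
  "rstab G \<Delta> = {g \<in> G. {x. g x \<noteq> x} \<subseteq> \<Delta>}"

definition Qset :: "('a::linorder \<Rightarrow> 'a) set \<Rightarrow> 'a set \<Rightarrow> ('a \<Rightarrow> 'a) set" where
  "Qset G \<Delta> = {h \<in> rstab G \<Delta>. \<exists>\<alpha>\<in>\<Delta>. Vcong G \<alpha> (h \<alpha>) = kappa G \<Delta>}"

definition ample :: "('a::linorder \<Rightarrow> 'a) set \<Rightarrow> bool" where
  "ample G \<longleftrightarrow> (\<forall>\<Delta>\<in>Tset G. Qset G \<Delta> \<noteq> {})"

definition induced_grp :: "('a::linorder \<Rightarrow> 'a) set \<Rightarrow> 'a set \<Rightarrow> ('a set \<Rightarrow> 'a set) set" where
  "induced_grp G \<Delta> = {restrict (\<lambda>C. g ` C) (piset G \<Delta>) | g. g \<in> stab G \<Delta>}"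

text \<open>type (I): the ordered set P is order-isomorphic (via phi) to a subgroup A of (R,+)
  and the group Gp acts as the right regular representation of A.\<close>
definition type_I :: "'b set \<Rightarrow> ('b \<Rightarrow> 'b \<Rightarrow> bool) \<Rightarrow> ('b \<Rightarrow> 'b) set \<Rightarrow> bool" where
  "type_I P lss Gp \<longleftrightarrow> (\<exists>(A::real set) \<phi>.
     0 \<in> A \<and> (\<forall>a\<in>A. \<forall>b\<in>A. a + b \<in> A) \<and> (\<forall>a\<in>A. - a \<in> A) \<and>
     bij_betw \<phi> P A \<and> (\<forall>C\<in>P. \<forall>D\<in>P. lss C D \<longleftrightarrow> \<phi> C < \<phi> D) \<and>
     (\<forall>f\<in>Gp. \<exists>a\<in>A. \<forall>C\<in>P. f C \<in> P \<and> \<phi> (f C) = \<phi> C + a) \<and>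
     (\<forall>a\<in>A. \<exists>f\<in>Gp. \<forall>C\<in>P. f C \<in> P \<and> \<phi> (f C) = \<phi> C + a))"

end

theory Submission
  imports Defs
begin

text \<open>
  If \<open>\<Delta>\<close> is minimal in \<open>T\<close>, the \<open>U\<close>-classes inside \<open>\<Delta>\<close> are points, so the elements of \<open>G\<close>
  supported in \<open>\<Delta>\<close> act on \<open>\<pi>(\<Delta>) = \<Delta>\<close>; when \<open>G(\<Delta>)\<close> is of type (I) they act as translations of a
  subgroup of \<open>\<real>\<close> and therefore commute. For \<open>h \<in> Q\<^sub>\<Delta>\<close>, everything below \<open>h\<^sub>1 = |h|\<close> is
  supported in \<open>\<Delta>\<close>.

  Conversely, the elements below \<open>h\<^sub>1\<close> commute, so they generate an abelian group \<open>E\<close>. It acts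
  transitively on the convex hull \<open>J\<close> of the \<open>\<langle>h\<^sub>1\<rangle>\<close>-orbit of a point \<open>\<alpha>\<close> moved by \<open>h\<^sub>1\<close>, and an
  element of \<open>G\<close> fixing one point of \<open>J\<close> fixes \<open>J\<close> pointwise. Hence \<open>J\<close> is a block, namely the class of
  \<open>\<alpha>\<close> in \<open>V(\<alpha>, h\<^sub>1\<alpha>)\<close>, and ampleness makes it minimal in \<open>T\<close>. Minimality makes \<open>E\<close> Archimedean,
  so Hoelder's construction \<open>\<phi>(k) = sup {m/n | h\<^sub>1\<^sup>m \<alpha> \<le> k\<^sup>n \<alpha>}\<close> embeds \<open>E\<close> into \<open>(\<real>, +)\<close>, and
  \<open>G(J)\<close> becomes the group of translations of \<open>\<phi>(E)\<close>.
\<close>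

definition order_convex :: "'a::linorder set \<Rightarrow> bool" where
  "order_convex B \<longleftrightarrow> (\<forall>x\<in>B. \<forall>y\<in>B. \<forall>w. x \<le> w \<and> w \<le> y \<longrightarrow> w \<in> B)"

lemma funpow_commute:
  assumes "f \<circ> g = g \<circ> f"
  shows "f \<circ> g ^^ n = g ^^ n \<circ> f"
proof (induct n)
  case (Suc n)
  have "f \<circ> g ^^ Suc n = (f \<circ> g) \<circ> g ^^ n" by (simp add: comp_assoc)
  also have "\<dots> = g \<circ> (f \<circ> g ^^ n)" by (simp add: assms comp_assoc)
  also have "\<dots> = g ^^ Suc n \<circ> f" by (simp only: Suc funpow.simps(2) comp_assoc)
  finally show ?case .
qed simp

lemma funpow_comp_commute:
  assumes "f \<circ> g = g \<circ> f"
  shows "(f \<circ> g) ^^ n = f ^^ n \<circ> g ^^ n"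
proof (induct n)
  case (Suc n)
  have "(f \<circ> g) ^^ Suc n = f \<circ> (g \<circ> f ^^ n) \<circ> g ^^ n"
    by (simp only: Suc funpow.simps(2) comp_assoc)
  also have "\<dots> = f ^^ Suc n \<circ> g ^^ Suc n"
    by (simp only: funpow_commute[OF assms[symmetric]] funpow.simps(2) comp_assoc)
  finally show ?case .
qed simp

locale transitive_l_perm_group =
  fixes G :: "('a::linorder \<Rightarrow> 'a) set"
  assumes l_perm_group: "l_perm_group G" and transitive: "transitive_grp G"
begin

lemma order_aut: "g \<in> G \<Longrightarrow> order_aut g"
  using l_perm_group unfolding l_perm_group_def by blast

lemma bij: "g \<in> G \<Longrightarrow> bij g"
  using order_aut unfolding order_aut_def by blast

lemma act_le_iff: "g \<in> G \<Longrightarrow> g x \<le> g y \<longleftrightarrow> x \<le> y"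
  using order_aut unfolding order_aut_def by blast

lemma act_eq_iff: "g \<in> G \<Longrightarrow> g x = g y \<longleftrightarrow> x = y"
  by (metis antisym act_le_iff order_refl)

lemma act_less_iff: "g \<in> G \<Longrightarrow> g x < g y \<longleftrightarrow> x < y"
  by (simp add: less_le act_le_iff act_eq_iff)

lemma id_in [simp]: "id \<in> G"
  using l_perm_group unfolding l_perm_group_def by blast

lemma id_in' [simp]: "(\<lambda>x. x) \<in> G"
  using id_in by (simp add: id_def)

lemma comp_in [simp]: "f \<in> G \<Longrightarrow> g \<in> G \<Longrightarrow> f \<circ> g \<in> G"
  using l_perm_group unfolding l_perm_group_def by blast

lemma comp_in' [simp]: "f \<in> G \<Longrightarrow> g \<in> G \<Longrightarrow> (\<lambda>x. f (g x)) \<in> G"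
  using comp_in unfolding comp_def .

lemma inv_in [simp]: "g \<in> G \<Longrightarrow> inv g \<in> G"
  using l_perm_group unfolding l_perm_group_def by blast

lemma max_in [simp]: "f \<in> G \<Longrightarrow> g \<in> G \<Longrightarrow> (\<lambda>x. max (f x) (g x)) \<in> G"
  using l_perm_group unfolding l_perm_group_def by blast

lemma min_in [simp]: "f \<in> G \<Longrightarrow> g \<in> G \<Longrightarrow> (\<lambda>x. min (f x) (g x)) \<in> G"
  using l_perm_group unfolding l_perm_group_def by blast

lemma funpow_in [simp]: "f \<in> G \<Longrightarrow> f ^^ n \<in> G"
  by (induct n) auto

lemma inv_apply [simp]: "g \<in> G \<Longrightarrow> inv g (g x) = x"
  by (meson bij bij_is_inj inv_f_f)

lemma apply_inv [simp]: "g \<in> G \<Longrightarrow> g (inv g x) = x"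
  by (meson bij bij_is_surj surj_f_inv_f)

lemma inv_inv [simp]: "g \<in> G \<Longrightarrow> inv (inv g) = g"
  by (meson bij inv_inv_eq)

lemma inv_le_iff: "g \<in> G \<Longrightarrow> inv g x \<le> y \<longleftrightarrow> x \<le> g y"
  using act_le_iff[of g "inv g x" y] by simp

lemma mem_image_iff:
  assumes g: "g \<in> G"
  shows "x \<in> g ` A \<longleftrightarrow> inv g x \<in> A"
proof
  show "x \<in> g ` A \<Longrightarrow> inv g x \<in> A" using g by auto
  show "inv g x \<in> A \<Longrightarrow> x \<in> g ` A" using g image_eqI[of x g "inv g x" A] by simp
qed

lemma transitiveE:
  obtains g where "g \<in> G" "g a = b"
  using transitive unfolding transitive_grp_def by blast

subsection \<open>Convex congruences\<close>

lemma cc_equiv: "convex_congruence G R \<Longrightarrow> equiv UNIV R"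
  unfolding convex_congruence_def by blast

lemma cc_refl: "convex_congruence G R \<Longrightarrow> (x, x) \<in> R"
  by (meson UNIV_I cc_equiv equiv_def refl_onD)

lemma cc_sym: "convex_congruence G R \<Longrightarrow> (x, y) \<in> R \<Longrightarrow> (y, x) \<in> R"
  by (meson cc_equiv equiv_def symD)

lemma cc_trans: "convex_congruence G R \<Longrightarrow> (x, y) \<in> R \<Longrightarrow> (y, z) \<in> R \<Longrightarrow> (x, z) \<in> R"
  by (meson cc_equiv equiv_def transD)

lemma cc_act: "convex_congruence G R \<Longrightarrow> g \<in> G \<Longrightarrow> (x, y) \<in> R \<Longrightarrow> (g x, g y) \<in> R"
  unfolding convex_congruence_def by blast

lemma cc_act_iff: "convex_congruence G R \<Longrightarrow> g \<in> G \<Longrightarrow> (g x, g y) \<in> R \<longleftrightarrow> (x, y) \<in> R"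
  by (metis cc_act inv_apply inv_in)

lemma cc_convex: "convex_congruence G R \<Longrightarrow> (x, y) \<in> R \<Longrightarrow> x \<le> z \<Longrightarrow> z \<le> y \<Longrightarrow> (x, z) \<in> R"
  unfolding convex_congruence_def by blast

lemma cc_between:
  assumes R: "convex_congruence G R" and xy: "(x, y) \<in> R"
    and z: "min x y \<le> z" "z \<le> max x y"
  shows "(x, z) \<in> R"
proof (cases "x \<le> y")
  case True
  then show ?thesis using cc_convex[OF R xy] z by simp
next
  case False
  then have "(y, z) \<in> R" using cc_convex[OF R cc_sym[OF R xy]] z by simp
  then show ?thesis using cc_trans[OF R xy] by blast
qed

lemma convex_congruence_Id: "convex_congruence G Id"
  unfolding convex_congruence_def
  by (auto simp: equiv_def refl_on_def sym_def trans_def dest: antisym)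

lemma convex_congruence_Inter:
  assumes "\<And>R. R \<in> F \<Longrightarrow> convex_congruence G R"
  shows "convex_congruence G (\<Inter>F)"
  unfolding convex_congruence_def equiv_def refl_on_def sym_def trans_def
proof (intro conjI allI ballI impI)
  fix x y z g
  show "(x, x) \<in> \<Inter>F" using assms cc_refl by blast
  show "(x, y) \<in> \<Inter>F \<Longrightarrow> (y, x) \<in> \<Inter>F" using assms cc_sym by blast
  show "(x, y) \<in> \<Inter>F \<Longrightarrow> (y, z) \<in> \<Inter>F \<Longrightarrow> (x, z) \<in> \<Inter>F" using assms cc_trans by blast
  show "g \<in> G \<Longrightarrow> (x, y) \<in> \<Inter>F \<Longrightarrow> (g x, g y) \<in> \<Inter>F" using assms cc_act by blast
  show "(x, y) \<in> \<Inter>F \<and> x \<le> z \<and> z \<le> y \<Longrightarrow> (x, z) \<in> \<Inter>F" using assms cc_convex by blast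
qed simp

lemma convex_congruence_Vcong: "convex_congruence G (Vcong G a b)"
  unfolding Vcong_def by (rule convex_congruence_Inter) blast

lemma Vcong_mem: "(a, b) \<in> Vcong G a b"
  unfolding Vcong_def by blast

lemma Vcong_least: "convex_congruence G R \<Longrightarrow> (a, b) \<in> R \<Longrightarrow> Vcong G a b \<subseteq> R"
  unfolding Vcong_def by blast

lemma Vcong_refl: "Vcong G a a = Id"
  using Vcong_least[OF convex_congruence_Id, of a a] cc_refl[OF convex_congruence_Vcong] by auto

lemma cc_Image_act:
  assumes R: "convex_congruence G R" and g: "g \<in> G"
  shows "R `` {g x} = g ` (R `` {x})"
proof (rule set_eqI)
  fix y
  have "(g x, y) \<in> R \<longleftrightarrow> (x, inv g y) \<in> R"
    using cc_act_iff[OF R g, of x "inv g y"] g by simp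
  then show "y \<in> R `` {g x} \<longleftrightarrow> y \<in> g ` (R `` {x})"
    using mem_image_iff[OF g] by auto
qed

lemma cc_subset_if_Image_subset:
  assumes R: "convex_congruence G R" and S: "convex_congruence G S"
    and sub: "R `` {a} \<subseteq> S `` {a}"
  shows "R \<subseteq> S"
proof safe
  fix u v assume uv: "(u, v) \<in> R"
  obtain g where g: "g \<in> G" "g a = u" by (rule transitiveE)
  have "v \<in> g ` (R `` {a})" using uv g cc_Image_act[OF R g(1), of a] by auto
  also have "\<dots> \<subseteq> g ` (S `` {a})" using sub by blast
  finally show "(u, v) \<in> S" using g cc_Image_act[OF S g(1), of a] by auto
qed

lemma cc_eq_if_Image_eq:
  "convex_congruence G R \<Longrightarrow> convex_congruence G S \<Longrightarrow> R `` {a} = S `` {a} \<Longrightarrow> R = S"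
  by (metis cc_subset_if_Image_subset order_refl subset_antisym)

text \<open>Moving \<open>a\<close> to \<open>b\<close> pushes \<open>c\<close> strictly between \<open>a\<close> and \<open>b\<close>.\<close>

lemma cc_no_crossing:
  assumes R: "convex_congruence G R" and S: "convex_congruence G S"
    and b: "(a, b) \<in> R" "(a, b) \<notin> S" and c: "(a, c) \<in> S" "(a, c) \<notin> R"
    and order: "c < a" "a < b"
  shows False
proof -
  obtain g where g: "g \<in> G" "g a = b" by (rule transitiveE)
  have "g c < b" using order(1) act_less_iff[OF g(1)] g(2) by metis
  have bgc: "(b, g c) \<in> S" using cc_act[OF S g(1) c(1)] g(2) by simp
  have "a < g c"
  proof (rule ccontr)
    assume "\<not> a < g c"
    then have "(b, a) \<in> S" using cc_between[OF S bgc, of a] order(2) by simp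
    then show False using b(2) cc_sym[OF S] by blast
  qed
  then have "(a, g c) \<in> R" using cc_convex[OF R b(1)] \<open>g c < b\<close> by simp
  then have "(g a, g c) \<in> R" using cc_trans[OF R cc_sym[OF R b(1)]] g(2) by simp
  then show False using c(2) cc_act_iff[OF R g(1)] by blast
qed

lemma cc_linear:
  assumes R: "convex_congruence G R" and S: "convex_congruence G S"
  shows "R \<subseteq> S \<or> S \<subseteq> R"
proof (rule ccontr)
  fix a
  assume "\<not> (R \<subseteq> S \<or> S \<subseteq> R)"
  then obtain b c where b: "(a, b) \<in> R" "(a, b) \<notin> S" and c: "(a, c) \<in> S" "(a, c) \<notin> R"
    using cc_subset_if_Image_subset[OF R S, of a] cc_subset_if_Image_subset[OF S R, of a] by blast
  have "a \<noteq> b" "a \<noteq> c" using b(2) c(2) cc_refl R S by metis+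
  consider "c < a" "a < b" | "b < a" "a < c" | "(a < b) = (a < c)"
    using \<open>a \<noteq> b\<close> \<open>a \<noteq> c\<close> by fastforce
  then show False
  proof cases
    case 1
    then show False using cc_no_crossing[OF R S b c] by blast
  next
    case 2
    then show False using cc_no_crossing[OF S R c b] by blast
  next
    case 3
    then have "min a c \<le> b \<and> b \<le> max a c \<or> min a b \<le> c \<and> c \<le> max a b"
      using \<open>a \<noteq> b\<close> \<open>a \<noteq> c\<close> by (auto simp: min_def max_def)
    then show False using cc_between[OF S c(1), of b] cc_between[OF R b(1), of c] b(2) c(2) by blast
  qed
qed


subsection \<open>The set \<open>T\<close> and its minimal elements\<close>

lemma Ucong_refl: "\<alpha> \<noteq> \<beta> \<Longrightarrow> (x, x) \<in> Ucong G \<alpha> \<beta>"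
  unfolding Ucong_def using convex_congruence_Id by blast

lemma Vcong_Image_in_Tset: "a \<noteq> b \<Longrightarrow> Vcong G a b `` {c} \<in> Tset G"
  unfolding Tset_def by blast

lemma wpair_spec:
  assumes "\<Delta> \<in> Tset G"
  shows "fst (wpair G \<Delta>) \<noteq> snd (wpair G \<Delta>)" "\<Delta> \<in> UNIV // kappa G \<Delta>"
proof -
  obtain a b c where "a \<noteq> b" "\<Delta> = Vcong G a b `` {c}"
    using assms unfolding Tset_def by blast
  then have "\<exists>p. fst p \<noteq> snd p \<and> \<Delta> \<in> UNIV // Vcong G (fst p) (snd p)"
    by (intro exI[of _ "(a, b)"]) (auto intro: quotientI)
  then have "fst (wpair G \<Delta>) \<noteq> snd (wpair G \<Delta>) \<and>
      \<Delta> \<in> UNIV // Vcong G (fst (wpair G \<Delta>)) (snd (wpair G \<Delta>))"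
    unfolding wpair_def by (rule someI_ex)
  then show "fst (wpair G \<Delta>) \<noteq> snd (wpair G \<Delta>)" "\<Delta> \<in> UNIV // kappa G \<Delta>"
    unfolding kappa_def by auto
qed

lemma convex_congruence_kappa: "convex_congruence G (kappa G \<Delta>)"
  unfolding kappa_def by (rule convex_congruence_Vcong)

lemma kappa_Image:
  assumes "\<Delta> \<in> Tset G" "x \<in> \<Delta>"
  shows "kappa G \<Delta> `` {x} = \<Delta>"
proof -
  obtain c where c: "\<Delta> = kappa G \<Delta> `` {c}"
    using wpair_spec(2)[OF assms(1)] by (auto elim: quotientE)
  then show ?thesis
    using assms(2) equiv_class_eq[OF cc_equiv[OF convex_congruence_kappa]] by blast
qed

lemma Qset_moves:
  assumes "\<Delta> \<in> Tset G" "h \<in> Qset G \<Delta>"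
  obtains \<gamma> where "\<gamma> \<in> \<Delta>" "h \<gamma> \<noteq> \<gamma>"
proof -
  obtain \<gamma> where \<gamma>: "\<gamma> \<in> \<Delta>" "Vcong G \<gamma> (h \<gamma>) = kappa G \<Delta>"
    using assms(2) unfolding Qset_def by blast
  have "kappa G \<Delta> \<noteq> Id"
    using wpair_spec(1)[OF assms(1)] Vcong_mem[of "fst (wpair G \<Delta>)" "snd (wpair G \<Delta>)"]
    unfolding kappa_def by (metis IdD prod.collapse)
  then have "h \<gamma> \<noteq> \<gamma>" using \<gamma>(2) Vcong_refl by metis
  then show thesis using that \<gamma>(1) by blast
qed

text \<open>If \<open>(x,y)\<close> with \<open>x \<noteq> y\<close> lies in a convex congruence \<open>R\<close> separating \<open>\<alpha>\<close> from \<open>\<beta>\<close>, then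
  \<open>R \<subseteq> V(\<alpha>,\<beta>)\<close>, so \<open>V(x,y)``{x}\<close> is a member of \<open>T\<close> inside \<open>\<Delta>\<close>; by minimality it is \<open>\<Delta>\<close>, whence
  \<open>V(x,y) = V(\<alpha>,\<beta>) \<subseteq> R\<close>, a contradiction.\<close>

lemma Ucong_Image_minimal:
  assumes T: "\<Delta> \<in> Tset G" and min: "\<forall>\<Delta>'\<in>Tset G. \<not> \<Delta>' \<subset> \<Delta>" and x: "x \<in> \<Delta>"
  shows "Ucong G (fst (wpair G \<Delta>)) (snd (wpair G \<Delta>)) `` {x} = {x}"
proof -
  define \<alpha> \<beta> where "\<alpha> = fst (wpair G \<Delta>)" and "\<beta> = snd (wpair G \<Delta>)"
  have V: "Vcong G \<alpha> \<beta> = kappa G \<Delta>" unfolding kappa_def \<alpha>_def \<beta>_def ..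
  have "(x, x) \<in> Ucong G \<alpha> \<beta>" using Ucong_refl wpair_spec(1)[OF T] \<alpha>_def \<beta>_def by blast
  moreover have "y = x" if xy: "(x, y) \<in> Ucong G \<alpha> \<beta>" for y
  proof (rule ccontr)
    assume "y \<noteq> x"
    obtain R where R: "convex_congruence G R" "(\<alpha>, \<beta>) \<notin> R" "(x, y) \<in> R"
      using xy unfolding Ucong_def by blast
    have "R \<subseteq> Vcong G \<alpha> \<beta>"
      using cc_linear[OF R(1) convex_congruence_Vcong[of \<alpha> \<beta>]] R(2) Vcong_mem by blast
    have W: "Vcong G x y \<subseteq> R" using Vcong_least[OF R(1,3)] .
    have "Vcong G x y `` {x} \<in> Tset G" using Vcong_Image_in_Tset \<open>y \<noteq> x\<close> by metis
    moreover have "Vcong G x y `` {x} \<subseteq> \<Delta>"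
      using W \<open>R \<subseteq> Vcong G \<alpha> \<beta>\<close> kappa_Image[OF T x] V by blast
    ultimately have "Vcong G x y `` {x} = Vcong G \<alpha> \<beta> `` {x}"
      using min kappa_Image[OF T x] V by blast
    then have "Vcong G x y = Vcong G \<alpha> \<beta>"
      using cc_eq_if_Image_eq convex_congruence_Vcong by metis
    then show False using W R(2) Vcong_mem by blast
  qed
  ultimately show ?thesis unfolding \<alpha>_def \<beta>_def by blast
qed

lemma piset_minimal:
  assumes T: "\<Delta> \<in> Tset G" and min: "\<forall>\<Delta>'\<in>Tset G. \<not> \<Delta>' \<subset> \<Delta>"
  shows "piset G \<Delta> = (\<lambda>x. {x}) ` \<Delta>"
proof -
  define U where "U = Ucong G (fst (wpair G \<Delta>)) (snd (wpair G \<Delta>))"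
  have U: "U `` {x} = {x}" if "x \<in> \<Delta>" for x
    unfolding U_def using Ucong_Image_minimal[OF T min that] .
  have "(y, y) \<in> U" for y unfolding U_def using Ucong_refl wpair_spec(1)[OF T] .
  have "C \<in> UNIV // U \<and> C \<subseteq> \<Delta> \<longleftrightarrow> C \<in> (\<lambda>x. {x}) ` \<Delta>" for C
  proof
    assume "C \<in> UNIV // U \<and> C \<subseteq> \<Delta>"
    then obtain y where "C = U `` {y}" "C \<subseteq> \<Delta>" by (auto elim: quotientE)
    moreover from this have "y \<in> \<Delta>" using \<open>(y, y) \<in> U\<close> by blast
    ultimately show "C \<in> (\<lambda>x. {x}) ` \<Delta>" using U by blast
  next
    assume "C \<in> (\<lambda>x. {x}) ` \<Delta>"
    then obtain x where "x \<in> \<Delta>" "C = U `` {x}" "C = {x}" using U by blast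
    then show "C \<in> UNIV // U \<and> C \<subseteq> \<Delta>" using quotientI[of x UNIV U] by simp
  qed
  then show ?thesis unfolding piset_def U_def[symmetric] by blast
qed

lemma image_eq_if_fixes_outside:
  assumes g: "g \<in> G" and outside: "\<And>x. x \<notin> \<Delta> \<Longrightarrow> g x = x"
  shows "g ` \<Delta> = \<Delta>"
proof -
  have "g y \<in> \<Delta>" if "y \<in> \<Delta>" for y
    using that outside[of "g y"] act_eq_iff[OF g, of "g y" y] by auto
  moreover have "inv g y \<in> \<Delta>" if "y \<in> \<Delta>" for y
    using that outside[of "inv g y"] apply_inv[OF g, of y] by (cases "inv g y \<in> \<Delta>") auto
  ultimately show ?thesis using mem_image_iff[OF g] by blast
qed

subsection \<open>Type (I) forces local commutativity\<close>

lemma pw_abs_in: "g \<in> G \<Longrightarrow> pw_abs g \<in> G"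
  unfolding pw_abs_def by simp

lemma le_pw_abs: "g \<in> G \<Longrightarrow> x \<le> pw_abs g x"
  unfolding pw_abs_def by (metis inv_le_iff le_cases max.coboundedI1 max.coboundedI2)

lemma fixed_if_pw_abs_fixed:
  assumes "g \<in> G" "pw_abs g x \<le> x"
  shows "g x = x"
  using assms inv_le_iff[of g x x] unfolding pw_abs_def by (simp add: antisym)

lemma pw_abs_fixed: "g \<in> G \<Longrightarrow> g x = x \<Longrightarrow> pw_abs g x = x"
  unfolding pw_abs_def by (metis inv_apply max.idem)

lemma pw_le_join_iff:
  "pw_le (pw_join (pw_abs a) (pw_abs b)) h \<longleftrightarrow> pw_le (pw_abs a) h \<and> pw_le (pw_abs b) h"
  unfolding pw_le_def pw_join_def by auto

lemma commute_if_type_I: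
  assumes T: "\<Delta> \<in> Tset G" and min: "\<forall>\<Delta>'\<in>Tset G. \<not> \<Delta>' \<subset> \<Delta>"
    and type_I: "type_I (piset G \<Delta>) set_less (induced_grp G \<Delta>)"
    and a: "a \<in> G" "\<And>x. x \<notin> \<Delta> \<Longrightarrow> a x = x" and b: "b \<in> G" "\<And>x. x \<notin> \<Delta> \<Longrightarrow> b x = x"
  shows "a \<circ> b = b \<circ> a"
proof -
  let ?P = "piset G \<Delta>"
  have P: "{x} \<in> ?P \<longleftrightarrow> x \<in> \<Delta>" for x using piset_minimal[OF T min] by blast
  obtain A :: "real set" and \<phi> where \<phi>: "bij_betw \<phi> ?P A"
    "\<forall>f\<in>induced_grp G \<Delta>. \<exists>s\<in>A. \<forall>C\<in>?P. f C \<in> ?P \<and> \<phi> (f C) = \<phi> C + s"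
    using type_I unfolding type_I_def by (elim exE conjE) blast
  have translation: "\<exists>s. \<forall>x\<in>\<Delta>. \<phi> {c x} = \<phi> {x} + s"
    if c: "c \<in> G" "\<And>x. x \<notin> \<Delta> \<Longrightarrow> c x = x" for c
  proof -
    have "restrict (\<lambda>C. c ` C) ?P \<in> induced_grp G \<Delta>"
      using c image_eq_if_fixes_outside[OF c] unfolding induced_grp_def stab_def by blast
    then obtain s where s: "\<forall>C\<in>?P. \<phi> (restrict (\<lambda>C. c ` C) ?P C) = \<phi> C + s"
      using \<phi>(2) by blast
    have "\<phi> {c x} = \<phi> {x} + s" if "x \<in> \<Delta>" for x
      using s that P[of x] by force
    then show ?thesis by blast
  qed
  obtain sa sb where sa: "\<forall>x\<in>\<Delta>. \<phi> {a x} = \<phi> {x} + sa" and sb: "\<forall>x\<in>\<Delta>. \<phi> {b x} = \<phi> {x} + sb"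
    using translation[OF a] translation[OF b] by blast
  have maps_to: "a x \<in> \<Delta>" "b x \<in> \<Delta>" if "x \<in> \<Delta>" for x
    using that image_eq_if_fixes_outside[OF a] image_eq_if_fixes_outside[OF b] by blast+
  show ?thesis
  proof
    fix x show "(a \<circ> b) x = (b \<circ> a) x"
    proof (cases "x \<in> \<Delta>")
      case True
      then have "\<phi> {a (b x)} = \<phi> {b (a x)}" using sa sb maps_to by simp
      moreover have "{a (b x)} \<in> ?P" "{b (a x)} \<in> ?P" using P maps_to True by blast+
      ultimately show ?thesis using bij_betw_imp_inj_on[OF \<phi>(1)] by (simp add: inj_on_eq_iff)
    qed (use a b in simp)
  qed
qed

text \<open>For \<open>h \<in> Q\<^sub>\<Delta>\<close> the element \<open>h\<^sub>1 = |h|\<close> is supported in \<open>\<Delta>\<close>, and so is everything below it.\<close>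

lemma commuting_neighbourhood_if_type_I:
  assumes ample: "ample G" and T: "\<Delta> \<in> Tset G" and min: "\<forall>\<Delta>'\<in>Tset G. \<not> \<Delta>' \<subset> \<Delta>"
    and type_I: "type_I (piset G \<Delta>) set_less (induced_grp G \<Delta>)"
  shows "\<exists>h1\<in>G. pw_le id h1 \<and> h1 \<noteq> id \<and>
            (\<forall>a\<in>G. \<forall>b\<in>G. pw_le (pw_join (pw_abs a) (pw_abs b)) h1 \<longrightarrow> a \<circ> b = b \<circ> a)"
proof -
  obtain h where h: "h \<in> Qset G \<Delta>" using ample T unfolding ample_def by blast
  then have hG: "h \<in> G" and h_fix: "\<And>x. x \<notin> \<Delta> \<Longrightarrow> h x = x"
    unfolding Qset_def rstab_def by auto
  obtain \<gamma> where "h \<gamma> \<noteq> \<gamma>" using Qset_moves[OF T h] .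
  have fix_outside: "c x = x" if "c \<in> G" "pw_le (pw_abs c) (pw_abs h)" "x \<notin> \<Delta>" for c x
    using that(1) fixed_if_pw_abs_fixed that(2) pw_abs_fixed[OF hG h_fix[OF that(3)]]
    unfolding pw_le_def by metis
  show ?thesis
  proof (intro bexI[of _ "pw_abs h"] conjI ballI impI)
    show "pw_abs h \<in> G" "pw_le id (pw_abs h)" using hG pw_abs_in le_pw_abs unfolding pw_le_def by auto
    show "pw_abs h \<noteq> id"
      using \<open>h \<gamma> \<noteq> \<gamma>\<close> fixed_if_pw_abs_fixed[OF hG] by (metis eq_id_iff order_refl)
    fix a b assume "a \<in> G" "b \<in> G" "pw_le (pw_join (pw_abs a) (pw_abs b)) (pw_abs h)"
    then show "a \<circ> b = b \<circ> a"
      using commute_if_type_I[OF T min type_I] fix_outside[of a] fix_outside[of b]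
      unfolding pw_le_join_iff by blast
  qed
qed


subsection \<open>Orbit hulls and blocks\<close>

lemma commute_inv:
  assumes e: "e \<in> G" and f: "f \<in> G" and commute: "e \<circ> f = f \<circ> e"
  shows "e \<circ> inv f = inv f \<circ> e"
proof
  fix x
  have "f (e (inv f x)) = e x" using fun_cong[OF commute, of "inv f x"] f by simp
  then show "(e \<circ> inv f) x = (inv f \<circ> e) x" using f by (metis comp_apply inv_apply)
qed

lemma funpow_inv_apply: "f \<in> G \<Longrightarrow> (inv f ^^ n) ((f ^^ n) z) = z"
proof (induct n arbitrary: z)
  case (Suc n)
  have "(inv f ^^ Suc n) ((f ^^ Suc n) z) = (inv f ^^ n) (inv f (f ((f ^^ n) z)))"
    by (simp only: funpow_Suc_right comp_apply funpow.simps(2) funpow_swap1)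
  then show ?case using Suc by simp
qed simp

lemma funpow_apply_inv: "f \<in> G \<Longrightarrow> (f ^^ n) ((inv f ^^ n) z) = z"
  using funpow_inv_apply[of "inv f" n z] by simp

definition orbit_hull :: "('a \<Rightarrow> 'a) \<Rightarrow> 'a \<Rightarrow> 'a set" where
  "orbit_hull f z = {y. \<exists>n m. (inv f ^^ n) z \<le> y \<and> y \<le> (f ^^ m) z}"

lemma orbit_hullI: "(inv f ^^ n) z \<le> y \<Longrightarrow> y \<le> (f ^^ m) z \<Longrightarrow> y \<in> orbit_hull f z"
  unfolding orbit_hull_def by blast

lemma orbit_hullE:
  assumes "y \<in> orbit_hull f z"
  obtains n m where "(inv f ^^ n) z \<le> y" "y \<le> (f ^^ m) z"
  using assms unfolding orbit_hull_def by blast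

lemma orbit_hull_self: "z \<in> orbit_hull f z"
  by (rule orbit_hullI[where n = 0 and m = 0]) simp_all

lemma order_convex_orbit_hull: "order_convex (orbit_hull f z)"
  unfolding order_convex_def orbit_hull_def by (auto intro: order_trans)

lemma orbit_hull_subset:
  assumes f: "f \<in> G" and y: "y \<in> orbit_hull f z"
  shows "orbit_hull f y \<subseteq> orbit_hull f z"
proof
  obtain n m where nm: "(inv f ^^ n) z \<le> y" "y \<le> (f ^^ m) z" using y by (rule orbit_hullE)
  fix w assume "w \<in> orbit_hull f y"
  then obtain n' m' where w: "(inv f ^^ n') y \<le> w" "w \<le> (f ^^ m') y" by (rule orbit_hullE)
  have "(inv f ^^ (n' + n)) z \<le> (inv f ^^ n') y"
    using nm(1) act_le_iff[OF funpow_in[OF inv_in[OF f]], of n'] by (simp add: funpow_add)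
  moreover have "(f ^^ m') y \<le> (f ^^ (m' + m)) z"
    using nm(2) act_le_iff[OF funpow_in[OF f], of m'] by (simp add: funpow_add)
  ultimately show "w \<in> orbit_hull f z" using w by (meson order_trans orbit_hullI)
qed

lemma orbit_hull_sym:
  assumes f: "f \<in> G" and y: "y \<in> orbit_hull f z"
  shows "z \<in> orbit_hull f y"
proof -
  obtain n m where nm: "(inv f ^^ n) z \<le> y" "y \<le> (f ^^ m) z" using y by (rule orbit_hullE)
  have "z \<le> (f ^^ n) y"
    using nm(1) act_le_iff[OF funpow_in[OF f], of n] funpow_apply_inv[OF f] by metis
  moreover have "(inv f ^^ m) y \<le> z"
    using nm(2) act_le_iff[OF funpow_in[OF inv_in[OF f]], of m] funpow_inv_apply[OF f] by metis
  ultimately show ?thesis by (rule orbit_hullI[rotated])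
qed

lemma orbit_hull_eq: "f \<in> G \<Longrightarrow> y \<in> orbit_hull f z \<Longrightarrow> orbit_hull f y = orbit_hull f z"
  by (meson orbit_hull_subset orbit_hull_sym subset_antisym)

lemma image_orbit_hull_subset:
  assumes e: "e \<in> G" and f: "f \<in> G" and commute: "e \<circ> f = f \<circ> e"
  shows "e ` orbit_hull f z \<subseteq> orbit_hull f (e z)"
proof clarify
  fix x assume "x \<in> orbit_hull f z"
  then obtain n m where nm: "(inv f ^^ n) z \<le> x" "x \<le> (f ^^ m) z" by (rule orbit_hullE)
  have "e ((f ^^ m) z) = (f ^^ m) (e z)" "e ((inv f ^^ n) z) = (inv f ^^ n) (e z)"
    using funpow_commute[OF commute] funpow_commute[OF commute_inv[OF e f commute]]
    by (metis comp_apply)+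
  then show "e x \<in> orbit_hull f (e z)"
    using nm act_le_iff[OF e] by (metis orbit_hullI)
qed

lemma image_orbit_hull:
  assumes e: "e \<in> G" and f: "f \<in> G" and commute: "e \<circ> f = f \<circ> e"
  shows "e ` orbit_hull f z = orbit_hull f (e z)"
proof
  have "inv e \<circ> f = f \<circ> inv e" using commute_inv[OF f e] commute by simp
  then have "inv e ` orbit_hull f (e z) \<subseteq> orbit_hull f z"
    using image_orbit_hull_subset[OF inv_in[OF e] f] e by fastforce
  then show "orbit_hull f (e z) \<subseteq> e ` orbit_hull f z" using mem_image_iff[OF e] by blast
qed (rule image_orbit_hull_subset[OF e f commute])

lemma cc_funpow:
  assumes R: "convex_congruence G R" and f: "f \<in> G" and z: "(z, f z) \<in> R"
  shows "(z, (f ^^ n) z) \<in> R"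
proof (induct n)
  case (Suc n)
  then show ?case using cc_trans[OF R z cc_act[OF R f Suc]] by simp
qed (simp add: cc_refl[OF R])

lemma orbit_hull_subset_class:
  assumes f: "f \<in> G" and R: "convex_congruence G R" and z: "(z, f z) \<in> R"
  shows "orbit_hull f z \<subseteq> R `` {z}"
proof
  have "(z, inv f z) \<in> R" using cc_sym[OF R cc_act[OF R inv_in[OF f] z]] f by simp
  then have up: "(z, (f ^^ m) z) \<in> R" and down: "(z, (inv f ^^ n) z) \<in> R" for n m
    using cc_funpow[OF R f z] cc_funpow[OF R inv_in[OF f]] by blast+
  fix y assume "y \<in> orbit_hull f z"
  then obtain n m where nm: "(inv f ^^ n) z \<le> y" "y \<le> (f ^^ m) z" by (rule orbit_hullE)
  have "((inv f ^^ n) z, y) \<in> R"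
    using cc_convex[OF R cc_trans[OF R cc_sym[OF R down] up] nm] .
  then show "y \<in> R `` {z}" using cc_trans[OF R down] by blast
qed

definition is_block :: "'a set \<Rightarrow> bool" where
  "is_block B \<longleftrightarrow> (\<forall>g\<in>G. g ` B = B \<or> g ` B \<inter> B = {})"

lemma is_blockI:
  assumes "\<And>g u. g \<in> G \<Longrightarrow> u \<in> B \<Longrightarrow> g u \<in> B \<Longrightarrow> g ` B = B"
  shows "is_block B"
  unfolding is_block_def using assms by blast

lemma block_translates_eq:
  assumes block: "is_block B" and g: "g \<in> G" "g' \<in> G" and w: "w \<in> g ` B" "w \<in> g' ` B"
  shows "g' ` B = g ` B"
proof -
  obtain u where u: "u \<in> B" "w = g' u" using w(2) by blast
  have "(inv g \<circ> g') u \<in> B" using u w(1) mem_image_iff[OF g(1)] by simp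
  then have "(inv g \<circ> g') ` B \<inter> B \<noteq> {}" using u(1) by blast
  moreover have "inv g \<circ> g' \<in> G" using g by simp
  ultimately have "(inv g \<circ> g') ` B = B" using block unfolding is_block_def by blast
  moreover have "g' = g \<circ> (inv g \<circ> g')" using g by (auto simp: fun_eq_iff)
  ultimately show ?thesis by (metis image_comp)
qed

definition block_rel :: "'a set \<Rightarrow> ('a \<times> 'a) set" where
  "block_rel B = {(y, w). \<exists>g\<in>G. y \<in> g ` B \<and> w \<in> g ` B}"

lemma convex_congruence_block_rel:
  assumes convex: "order_convex B" and a: "a \<in> B" and block: "is_block B"
  shows "convex_congruence G (block_rel B)"
proof -
  have "equiv UNIV (block_rel B)"
  proof (rule equivI)
    show "refl (block_rel B)"
      unfolding refl_on_def block_rel_def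
    proof clarsimp
      fix x
      obtain g where "g \<in> G" "g a = x" by (rule transitiveE)
      then show "\<exists>g\<in>G. x \<in> g ` B" using a by blast
    qed
    show "sym (block_rel B)" unfolding sym_def block_rel_def by blast
    show "trans (block_rel B)"
      unfolding trans_def block_rel_def using block_translates_eq[OF block] by blast
  qed simp
  moreover have "(g x, g y) \<in> block_rel B" if g: "g \<in> G" and xy: "(x, y) \<in> block_rel B" for g x y
  proof -
    obtain k where "k \<in> G" "x \<in> k ` B" "y \<in> k ` B" using xy unfolding block_rel_def by blast
    then have "g \<circ> k \<in> G" "g x \<in> (g \<circ> k) ` B" "g y \<in> (g \<circ> k) ` B" using g by auto
    then show ?thesis unfolding block_rel_def by blast
  qed
  moreover have "(x, z) \<in> block_rel B" if xy: "(x, y) \<in> block_rel B" and z: "x \<le> z" "z \<le> y"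
    for x y z
  proof -
    obtain k where k: "k \<in> G" "x \<in> k ` B" "y \<in> k ` B" using xy unfolding block_rel_def by blast
    then have "inv k z \<in> B"
      using convex z act_le_iff[OF inv_in[OF k(1)]] mem_image_iff[OF k(1)]
      unfolding order_convex_def by blast
    then show ?thesis using k mem_image_iff[OF k(1)] unfolding block_rel_def by blast
  qed
  ultimately show ?thesis unfolding convex_congruence_def by blast
qed

lemma block_rel_Image:
  assumes "a \<in> B" "is_block B"
  shows "block_rel B `` {a} = B"
  using block_translates_eq[OF assms(2) id_in] assms(1) unfolding block_rel_def
  by (auto intro: bexI[of _ id])

end

subsection \<open>Local commutativity yields a minimal class of type (I)\<close>

locale commuting_neighbourhood = transitive_l_perm_group +
  fixes h1 :: "'a \<Rightarrow> 'a" and \<alpha> :: 'a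
  assumes h1_in: "h1 \<in> G" and le_h1: "\<And>x. x \<le> h1 x" and h1_moves: "h1 \<alpha> \<noteq> \<alpha>"
    and commute_below_h1:
      "\<And>a b. a \<in> G \<Longrightarrow> b \<in> G \<Longrightarrow> pw_le (pw_join (pw_abs a) (pw_abs b)) h1 \<Longrightarrow> a \<circ> b = b \<circ> a"
    and ample: "ample G"
begin

definition small :: "('a \<Rightarrow> 'a) \<Rightarrow> bool" where
  "small a \<longleftrightarrow> a \<in> G \<and> pw_le (pw_abs a) h1"

lemma small_iff: "small a \<longleftrightarrow> a \<in> G \<and> (\<forall>x. a x \<le> h1 x \<and> inv a x \<le> h1 x)"
  unfolding small_def pw_le_def pw_abs_def by simp

lemma small_commute: "small a \<Longrightarrow> small b \<Longrightarrow> a \<circ> b = b \<circ> a"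
  using commute_below_h1 unfolding small_def pw_le_join_iff by blast

lemma inv_h1_le: "inv h1 x \<le> x"
  using inv_le_iff[OF h1_in] le_h1 by blast

lemma small_h1: "small h1"
  unfolding small_iff using h1_in le_h1 inv_h1_le order_trans by blast

lemma small_inv: "small a \<Longrightarrow> small (inv a)"
  unfolding small_iff by auto

lemma small_lower: "small a \<Longrightarrow> inv h1 x \<le> a x"
  unfolding small_iff by (metis h1_in inv_apply inv_le_iff)

text \<open>Clamp a transitivity witness between \<open>h1\<^sup>-\<^sup>1\<close> and \<open>h1\<close>.\<close>

lemma small_transitive:
  assumes "inv h1 z \<le> y" "y \<le> h1 z"
  obtains b where "small b" "b z = y"
proof -
  obtain g where g: "g \<in> G" "g z = y" by (rule transitiveE)
  define b where "b x = max (min (g x) (h1 x)) (inv h1 x)" for x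
  have b: "b \<in> G" "\<And>x. b x \<le> h1 x" "\<And>x. inv h1 x \<le> b x"
    unfolding b_def using g h1_in le_h1 inv_h1_le by (auto intro: order_trans)
  have "inv b x \<le> h1 x" for x
    using b(3)[of "h1 x"] h1_in inv_le_iff[OF b(1)] by simp
  then have "small b" using b unfolding small_iff by blast
  moreover have "b z = y" using assms g(2) unfolding b_def by simp
  ultimately show thesis using that by blast
qed

inductive_set small_gen :: "('a \<Rightarrow> 'a) set" where
  id: "id \<in> small_gen"
| step: "small b \<Longrightarrow> e \<in> small_gen \<Longrightarrow> b \<circ> e \<in> small_gen"

lemma small_gen_in: "e \<in> small_gen \<Longrightarrow> e \<in> G"
  by (induct rule: small_gen.induct) (auto simp: small_def)

lemma small_gen_commute_small: "e \<in> small_gen \<Longrightarrow> small p \<Longrightarrow> p \<circ> e = e \<circ> p"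
proof (induct rule: small_gen.induct)
  case (step b e)
  then show ?case using small_commute[OF step(4,1)] by (metis comp_assoc)
qed simp

lemma small_gen_commute: "e \<in> small_gen \<Longrightarrow> e' \<in> small_gen \<Longrightarrow> e \<circ> e' = e' \<circ> e"
proof (induct rule: small_gen.induct)
  case (step b e)
  then show ?case using small_gen_commute_small[OF step(4,1)] by (metis comp_assoc)
qed simp

lemma small_gen_commute_apply: "e \<in> small_gen \<Longrightarrow> e' \<in> small_gen \<Longrightarrow> e (e' x) = e' (e x)"
  using small_gen_commute by (metis comp_apply)

lemma small_gen_comp: "e \<in> small_gen \<Longrightarrow> e' \<in> small_gen \<Longrightarrow> e \<circ> e' \<in> small_gen"
  by (induct rule: small_gen.induct) (auto simp: comp_assoc intro: small_gen.step)

lemma small_gen_small: "small b \<Longrightarrow> b \<in> small_gen"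
  using small_gen.step[OF _ small_gen.id] by fastforce

lemma small_gen_funpow: "e \<in> small_gen \<Longrightarrow> e ^^ n \<in> small_gen"
  by (induct n) (simp_all add: small_gen.id small_gen_comp)

lemma small_gen_inv: "e \<in> small_gen \<Longrightarrow> inv e \<in> small_gen"
proof (induct rule: small_gen.induct)
  case id
  then show ?case by (simp only: inv_id small_gen.id)
next
  case (step b e)
  have "inv (b \<circ> e) = inv e \<circ> inv b"
    using step(1,2) by (simp add: o_inv_distrib bij small_def small_gen_in)
  then show ?case using small_gen_comp[OF step(3) small_gen_small[OF small_inv[OF step(1)]]]
    by (simp only:)
qed

lemma small_gen_h1: "h1 ^^ n \<in> small_gen" "inv h1 ^^ n \<in> small_gen"
  using small_gen_funpow small_gen_small small_h1 small_inv by blast+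

lemma h1_funpow_mono:
  assumes "m \<le> n"
  shows "(h1 ^^ m) z \<le> (h1 ^^ n) z" "(inv h1 ^^ n) z \<le> (inv h1 ^^ m) z"
  using assms by (induct rule: dec_induct) (auto intro: order_trans le_h1 inv_h1_le)

lemma small_gen_transitive_on_interval:
  assumes "(inv h1 ^^ n) z \<le> y" "y \<le> (h1 ^^ n) z"
  shows "\<exists>e\<in>small_gen. e z = y"
  using assms
proof (induct n arbitrary: y)
  case 0
  then show ?case by (intro bexI[of _ id]) (simp_all add: small_gen.id)
next
  case (Suc n)
  consider "(inv h1 ^^ n) z \<le> y" "y \<le> (h1 ^^ n) z" | "(h1 ^^ n) z \<le> y" | "y \<le> (inv h1 ^^ n) z"
    by fastforce
  then show ?case
  proof cases
    case 1
    then show ?thesis using Suc(1) by blast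
  next
    case 2
    have "inv h1 ((h1 ^^ n) z) \<le> y" "y \<le> h1 ((h1 ^^ n) z)"
      using 2 Suc(3) inv_h1_le order_trans by auto
    then obtain b where "small b" "b ((h1 ^^ n) z) = y" by (rule small_transitive)
    then show ?thesis using small_gen.step[OF _ small_gen_h1(1)] by (intro bexI[of _ "b \<circ> h1 ^^ n"]) auto
  next
    case 3
    have "inv h1 ((inv h1 ^^ n) z) \<le> y" "y \<le> h1 ((inv h1 ^^ n) z)"
      using 3 Suc(2) le_h1 order_trans by auto
    then obtain b where "small b" "b ((inv h1 ^^ n) z) = y" by (rule small_transitive)
    then show ?thesis using small_gen.step[OF _ small_gen_h1(2)] by (intro bexI[of _ "b \<circ> inv h1 ^^ n"]) auto
  qed
qed

lemma small_gen_transitive_on_hull: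
  assumes "y \<in> orbit_hull h1 z"
  obtains e where "e \<in> small_gen" "e z = y"
proof -
  obtain n m where nm: "(inv h1 ^^ n) z \<le> y" "y \<le> (h1 ^^ m) z" using assms by (rule orbit_hullE)
  have "(inv h1 ^^ (n + m)) z \<le> (inv h1 ^^ n) z" "(h1 ^^ m) z \<le> (h1 ^^ (n + m)) z"
    using h1_funpow_mono[of n "n + m" z] h1_funpow_mono[of m "n + m" z] by simp_all
  then have "(inv h1 ^^ (n + m)) z \<le> y" "y \<le> (h1 ^^ (n + m)) z"
    using nm by (meson order_trans)+
  then show thesis using small_gen_transitive_on_interval that by blast
qed

text \<open>Small elements commute with the transitive group \<open>small_gen\<close> on an \<open>h1\<close>-orbit hull,
  so a small element fixing one point of it fixes all of it.\<close>

lemma small_fixes_hull: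
  assumes p: "small p" "p z = z" and y: "y \<in> orbit_hull h1 z"
  shows "p y = y"
proof -
  obtain e where "e \<in> small_gen" "e z = y" using y by (rule small_gen_transitive_on_hull)
  then show ?thesis using small_gen_commute_small[OF _ p(1)] p(2) by (metis comp_apply)
qed

abbreviation J :: "'a set" where
  "J \<equiv> orbit_hull h1 \<alpha>"

lemma J_eq: "y \<in> J \<Longrightarrow> orbit_hull h1 y = J"
  using orbit_hull_eq[OF h1_in] .

lemma less_h1_on_J:
  assumes "y \<in> J"
  shows "y < h1 y"
proof (rule ccontr)
  assume "\<not> y < h1 y"
  then have "h1 y = y" using le_h1[of y] by simp
  then have "h1 \<alpha> = \<alpha>"
    using small_fixes_hull[OF small_h1] orbit_hull_sym[OF h1_in assms] by blast
  then show False using h1_moves by blast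
qed

lemma fixes_J_if_increasing:
  assumes f: "f \<in> G" "\<And>x. x \<le> f x" and y: "y \<in> J" "f y = y" and w: "w \<in> J"
  shows "f w = w"
proof -
  define p where "p x = min (f x) (h1 x)" for x
  have "p \<in> G" "\<And>x. x \<le> p x" "\<And>x. p x \<le> h1 x"
    unfolding p_def using f h1_in le_h1 by auto
  then have "small p"
    unfolding small_iff using inv_le_iff le_h1 order_trans by blast
  moreover have "p y = y" unfolding p_def using y le_h1[of y] by simp
  ultimately have "p w = w" using small_fixes_hull J_eq[OF y(1)] w by blast
  then show ?thesis using less_h1_on_J[OF w] f(2)[of w] unfolding p_def by (simp add: min_def split: if_splits)
qed

text \<open>Apply the previous lemma to \<open>f \<or> 1\<close> and \<open>f\<^sup>-\<^sup>1 \<or> 1\<close>.\<close>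

lemma fixes_J:
  assumes f: "f \<in> G" and y: "y \<in> J" "f y = y" and w: "w \<in> J"
  shows "f w = w"
proof -
  have "max (f w) w = w"
    using fixes_J_if_increasing[of "\<lambda>x. max (f x) x" y w] f y w by simp
  moreover have "max (inv f w) w = w"
    using fixes_J_if_increasing[of "\<lambda>x. max (inv f x) x" y w] f y w inv_apply[OF f, of y] by simp
  ultimately show ?thesis using inv_le_iff[OF f] by (metis antisym max.orderI max_def)
qed

lemma agree_on_J:
  assumes k: "k \<in> G" and e: "e \<in> G" and u: "u \<in> J" "k u = e u" and x: "x \<in> J"
  shows "k x = e x"
proof -
  have "(inv e \<circ> k) x = x" using fixes_J[of "inv e \<circ> k" u x] k e u x by simp
  then show ?thesis using e by (metis apply_inv comp_apply)
qed

lemma small_gen_maps_J: "e \<in> small_gen \<Longrightarrow> x \<in> J \<Longrightarrow> e x \<in> J"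
proof (induct arbitrary: x rule: small_gen.induct)
  case (step b e)
  have "b (e x) \<in> orbit_hull h1 (e x)"
    using small_lower[OF step(1)] step(1) unfolding small_iff
    by (intro orbit_hullI[where n = 1 and m = 1]) simp_all
  then show ?case using J_eq step by simp
qed simp

lemma small_gen_image_J: "e \<in> small_gen \<Longrightarrow> e ` J = J"
  using small_gen_maps_J small_gen_inv mem_image_iff small_gen_in by (metis subsetI subset_antisym image_subsetI)


text \<open>A block for \<open>small_gen\<close> inside \<open>J\<close> is a block for all of \<open>G\<close>, since on \<open>J\<close> every element
  of \<open>G\<close> agrees with an element of \<open>small_gen\<close>.\<close>

lemma is_block_if_small_gen_block:
  assumes sub: "B \<subseteq> J" and block: "\<And>e u. e \<in> small_gen \<Longrightarrow> u \<in> B \<Longrightarrow> e u \<in> B \<Longrightarrow> e ` B = B"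
  shows "is_block B"
proof (rule is_blockI)
  fix k u assume k: "k \<in> G" and u: "u \<in> B" "k u \<in> B"
  have "k u \<in> orbit_hull h1 u" using u sub J_eq by auto
  then obtain e where e: "e \<in> small_gen" "e u = k u" by (rule small_gen_transitive_on_hull)
  have "k x = e x" if "x \<in> B" for x
    using agree_on_J[OF k small_gen_in[OF e(1)] _ e(2)[symmetric]] u(1) that sub by blast
  then have "k ` B = e ` B" by (rule image_cong[OF refl])
  also have "\<dots> = B" using block[OF e(1) u(1)] e(2) u(2) by simp
  finally show "k ` B = B" .
qed

lemma Vcong_Image_subset_block:
  assumes convex: "order_convex B" and block: "is_block B" and \<alpha>: "\<alpha> \<in> B" and \<beta>: "\<beta> \<in> B"
  shows "Vcong G \<alpha> \<beta> `` {\<alpha>} \<subseteq> B"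
proof -
  have "(\<alpha>, \<beta>) \<in> block_rel B" unfolding block_rel_def using \<alpha> \<beta> id_in by (auto intro: bexI[of _ id])
  then have "Vcong G \<alpha> \<beta> \<subseteq> block_rel B"
    using Vcong_least convex_congruence_block_rel[OF convex \<alpha> block] by blast
  then show ?thesis using block_rel_Image[OF \<alpha> block] by blast
qed

lemma h1_in_J: "h1 \<alpha> \<in> J"
  by (rule orbit_hullI[where n = 0 and m = 1]) (simp_all add: le_h1)

lemma J_eq_Vcong_Image: "J = Vcong G \<alpha> (h1 \<alpha>) `` {\<alpha>}"
proof
  have "is_block J" using is_block_if_small_gen_block small_gen_image_J by blast
  then show "Vcong G \<alpha> (h1 \<alpha>) `` {\<alpha>} \<subseteq> J"
    using Vcong_Image_subset_block order_convex_orbit_hull orbit_hull_self h1_in_J by blast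
  show "J \<subseteq> Vcong G \<alpha> (h1 \<alpha>) `` {\<alpha>}"
    using orbit_hull_subset_class[OF h1_in convex_congruence_Vcong Vcong_mem] .
qed

lemma J_in_Tset: "J \<in> Tset G"
  unfolding J_eq_Vcong_Image using Vcong_Image_in_Tset h1_moves by metis

lemma J_minimal: "\<forall>\<Delta>'\<in>Tset G. \<not> \<Delta>' \<subset> J"
proof (intro ballI notI)
  fix \<Delta> assume T: "\<Delta> \<in> Tset G" and sub: "\<Delta> \<subset> J"
  obtain h where h: "h \<in> Qset G \<Delta>" using ample T unfolding ample_def by blast
  then have hG: "h \<in> G" and h_fix: "\<And>x. x \<notin> \<Delta> \<Longrightarrow> h x = x"
    unfolding Qset_def rstab_def by auto
  obtain \<gamma> where "\<gamma> \<in> \<Delta>" "h \<gamma> \<noteq> \<gamma>" using Qset_moves[OF T h] .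
  moreover obtain y where "y \<in> J" "y \<notin> \<Delta>" using sub by blast
  ultimately show False using fixes_J[OF hG] h_fix sub by blast
qed

text \<open>Archimedean property of \<open>small_gen\<close>: otherwise the orbit hull of \<open>\<alpha>\<close> under \<open>d\<close> would be a
  block properly inside \<open>J\<close>, giving a smaller member of \<open>T\<close>.\<close>

lemma archimedean:
  assumes d: "d \<in> small_gen" and moves: "\<alpha> < d \<alpha>"
  obtains n where "h1 \<alpha> \<le> (d ^^ n) \<alpha>"
proof -
  let ?B = "orbit_hull d \<alpha>"
  have dG: "d \<in> G" using small_gen_in[OF d] .
  have B_sub: "?B \<subseteq> J"
  proof
    fix x assume "x \<in> ?B"
    then obtain n m where "(inv d ^^ n) \<alpha> \<le> x" "x \<le> (d ^^ m) \<alpha>" by (rule orbit_hullE)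
    moreover have "(inv d ^^ n) \<alpha> \<in> J" "(d ^^ m) \<alpha> \<in> J"
      using small_gen_maps_J[OF small_gen_funpow orbit_hull_self] small_gen_inv[OF d] d by blast+
    ultimately show "x \<in> J" using order_convex_orbit_hull unfolding order_convex_def by blast
  qed
  have "e ` ?B = ?B" if e: "e \<in> small_gen" and u: "u \<in> ?B" "e u \<in> ?B" for e u
    using image_orbit_hull[OF small_gen_in[OF e] dG small_gen_commute[OF e d]] orbit_hull_eq[OF dG] u
    by metis
  then have "is_block ?B" using is_block_if_small_gen_block[OF B_sub] by blast
  moreover have "d \<alpha> \<in> ?B"
    by (rule orbit_hullI[where n = 0 and m = 1]) (use moves in simp_all)
  ultimately have "Vcong G \<alpha> (d \<alpha>) `` {\<alpha>} \<subseteq> ?B"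
    using Vcong_Image_subset_block order_convex_orbit_hull orbit_hull_self by blast
  moreover have "\<not> Vcong G \<alpha> (d \<alpha>) `` {\<alpha>} \<subset> J"
    using J_minimal Vcong_Image_in_Tset moves by (metis order_less_irrefl)
  ultimately have "h1 \<alpha> \<in> ?B" using B_sub h1_in_J by blast
  then obtain m where "h1 \<alpha> \<le> (d ^^ m) \<alpha>" by (rule orbit_hullE)
  then show thesis by (rule that)
qed


subsection \<open>Hoelder's embedding of \<open>small_gen\<close> into the reals\<close>

definition hpow :: "int \<Rightarrow> 'a \<Rightarrow> 'a" where
  "hpow m = (if 0 \<le> m then h1 ^^ nat m else inv h1 ^^ nat (- m))"

lemma hpow_in_small_gen: "hpow m \<in> small_gen"
  unfolding hpow_def using small_gen_h1 by simp

lemma hpow_0: "hpow 0 x = x"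
  unfolding hpow_def by simp

lemma hpow_1: "hpow 1 = h1"
  unfolding hpow_def by simp

lemma hpow_nat: "hpow (int n) = h1 ^^ n" "hpow (- int n) = inv h1 ^^ n"
  unfolding hpow_def by (auto simp: funpow_0 fun_eq_iff)

lemma hpow_succ: "hpow (m + 1) x = h1 (hpow m x)"
proof (cases "0 \<le> m")
  case True
  then have "nat (m + 1) = Suc (nat m)" by simp
  then show ?thesis using True unfolding hpow_def by simp
next
  case False
  define k where "k = nat (- m - 1)"
  then have m: "m = - int (Suc k)" and m1: "m + 1 = - int k" using False by simp_all
  have "hpow m x = (inv h1 ^^ Suc k) x" unfolding m hpow_nat ..
  moreover have "hpow (m + 1) x = (inv h1 ^^ k) x" unfolding m1 hpow_nat ..
  ultimately show ?thesis using h1_in by simp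
qed

lemma hpow_add: "hpow (a + b) x = hpow a (hpow b x)"
proof (induct a rule: int_induct[where k = 0])
  case base
  then show ?case by (simp add: hpow_0)
next
  case (step1 i)
  have "hpow (i + 1 + b) x = hpow ((i + b) + 1) x" by (simp add: ac_simps)
  then show ?case using step1 by (simp add: hpow_succ)
next
  case (step2 i)
  have "hpow (i + b) x = hpow ((i - 1 + b) + 1) x" "hpow i y = hpow ((i - 1) + 1) y" for y
    by simp_all
  then show ?case using step2 h1_in by (metis hpow_succ inv_apply)
qed

lemma hpow_funpow: "(hpow m ^^ n) x = hpow (m * int n) x"
  by (induct n) (simp_all add: hpow_0 hpow_add algebra_simps)

lemma less_hpow:
  assumes y: "y \<in> J" and c: "0 < c"
  shows "y < hpow c y"
proof -
  obtain k where "nat c = Suc k" using c by (metis gr0_implies_Suc zero_less_nat_eq)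
  then have "hpow c y = (h1 ^^ k) (h1 y)" using c unfolding hpow_def by (simp add: funpow_swap1)
  moreover have "h1 y \<le> (h1 ^^ k) (h1 y)" using h1_funpow_mono(1)[of 0 k] by simp
  ultimately show ?thesis using less_h1_on_J[OF y] by simp
qed

lemma strict_mono_hpow: "strict_mono (\<lambda>m. hpow m \<alpha>)"
proof (rule strict_monoI)
  fix a b :: int assume "a < b"
  moreover have "hpow b \<alpha> = hpow (b - a) (hpow a \<alpha>)" using hpow_add[of "b - a" a] by simp
  moreover have "hpow a \<alpha> \<in> J" using small_gen_maps_J[OF hpow_in_small_gen orbit_hull_self] .
  ultimately show "hpow a \<alpha> < hpow b \<alpha>" using less_hpow by simp
qed

lemma hpow_le_iff: "hpow a \<alpha> \<le> hpow b \<alpha> \<longleftrightarrow> a \<le> b"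
  using strict_mono_less_eq[OF strict_mono_hpow] .

text \<open>Commutativity makes comparison at \<open>\<alpha>\<close> a translation-invariant order on \<open>small_gen\<close>.\<close>

lemma small_gen_le_at:
  assumes "e \<in> small_gen" "e' \<in> small_gen" "c \<in> small_gen" "e \<alpha> \<le> e' \<alpha>"
  shows "e (c \<alpha>) \<le> e' (c \<alpha>)"
  using assms small_gen_commute_apply[of e c] small_gen_commute_apply[of e' c]
    act_le_iff[OF small_gen_in[OF assms(3)]] by metis

lemma small_gen_comp_le:
  assumes "e1 \<in> small_gen" "e2 \<in> small_gen" "e3 \<in> small_gen" "e4 \<in> small_gen"
    and "e1 \<alpha> \<le> e2 \<alpha>" "e3 \<alpha> \<le> e4 \<alpha>"
  shows "e1 (e3 \<alpha>) \<le> e2 (e4 \<alpha>)"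
proof -
  have "e1 (e3 \<alpha>) \<le> e1 (e4 \<alpha>)" using act_le_iff[OF small_gen_in[OF assms(1)]] assms(6) by blast
  also have "\<dots> \<le> e2 (e4 \<alpha>)" using small_gen_le_at[OF assms(1,2,4,5)] .
  finally show ?thesis .
qed

lemma small_gen_funpow_le:
  assumes "e \<in> small_gen" "e' \<in> small_gen" "e \<alpha> \<le> e' \<alpha>"
  shows "(e ^^ n) \<alpha> \<le> (e' ^^ n) \<alpha>"
proof (induct n)
  case (Suc n)
  then show ?case using small_gen_comp_le[OF assms(1,2) small_gen_funpow small_gen_funpow assms(3)] assms
    by simp
qed simp

lemma hpow_bracket:
  assumes k: "k \<in> small_gen"
  obtains m where "hpow m \<alpha> \<le> (k ^^ n) \<alpha>" "(k ^^ n) \<alpha> < hpow (m + 1) \<alpha>"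
proof -
  define y where "y = (k ^^ n) \<alpha>"
  have "y \<in> J" unfolding y_def using small_gen_maps_J[OF small_gen_funpow[OF k] orbit_hull_self] .
  then obtain a b where "(inv h1 ^^ a) \<alpha> \<le> y" "y \<le> (h1 ^^ b) \<alpha>" by (rule orbit_hullE)
  then have lo: "hpow (- int a) \<alpha> \<le> y" and "y \<le> hpow (int b) \<alpha>"
    by (simp_all add: hpow_nat)
  then have hi: "y < hpow (int b + 1) \<alpha>"
    using strict_monoD[OF strict_mono_hpow, of "int b" "int b + 1"] by simp
  define M where "M = {m. - int a \<le> m \<and> m \<le> int b \<and> hpow m \<alpha> \<le> y}"
  have "finite M" unfolding M_def by (rule finite_subset[of _ "{- int a..int b}"]) (simp_all add: subset_iff)
  moreover have "- int a \<in> M" unfolding M_def using lo by simp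
  ultimately have max: "Max M \<in> M" "\<And>m. m \<in> M \<Longrightarrow> m \<le> Max M" using Max_in Max_ge by blast+
  have "y < hpow (Max M + 1) \<alpha>"
  proof (rule ccontr)
    assume "\<not> y < hpow (Max M + 1) \<alpha>"
    then have le: "hpow (Max M + 1) \<alpha> \<le> y" by simp
    then have "hpow (Max M + 1) \<alpha> < hpow (int b + 1) \<alpha>" using hi by (rule le_less_trans)
    then have "Max M + 1 \<le> int b" using strict_mono_less[OF strict_mono_hpow] by simp
    then have "Max M + 1 \<in> M" using le max(1) unfolding M_def by simp
    then show False using max(2) by (meson add_le_same_cancel1 not_one_le_zero)
  qed
  then show thesis using that max(1) unfolding M_def y_def by blast
qed


definition lower_ratios :: "('a \<Rightarrow> 'a) \<Rightarrow> real set" where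
  "lower_ratios k = {real_of_int m / real n | m n. 0 < n \<and> hpow m \<alpha> \<le> (k ^^ n) \<alpha>}"

definition hoelder :: "('a \<Rightarrow> 'a) \<Rightarrow> real" where
  "hoelder k = Sup (lower_ratios k)"

lemma lower_ratio_le_upper_ratio:
  assumes k: "k \<in> small_gen" and n: "0 < n" "0 < n'"
    and lower: "hpow m \<alpha> \<le> (k ^^ n) \<alpha>" and upper: "(k ^^ n') \<alpha> \<le> hpow m' \<alpha>"
  shows "real_of_int m / real n \<le> real_of_int m' / real n'"
proof -
  have "(hpow m ^^ n') \<alpha> \<le> ((k ^^ n) ^^ n') \<alpha>"
    using small_gen_funpow_le[OF hpow_in_small_gen small_gen_funpow[OF k] lower] .
  then have 1: "hpow (m * int n') \<alpha> \<le> (k ^^ (n * n')) \<alpha>" by (simp add: hpow_funpow funpow_mult)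
  have "((k ^^ n') ^^ n) \<alpha> \<le> (hpow m' ^^ n) \<alpha>"
    using small_gen_funpow_le[OF small_gen_funpow[OF k] hpow_in_small_gen upper] .
  then have 2: "(k ^^ (n * n')) \<alpha> \<le> hpow (m' * int n) \<alpha>"
    by (simp add: hpow_funpow funpow_mult mult.commute)
  have "m * int n' \<le> m' * int n" using order_trans[OF 1 2] hpow_le_iff by blast
  then have "real_of_int m * real n' \<le> real_of_int m' * real n"
    by (metis of_int_le_iff of_int_mult of_int_of_nat_eq)
  then show ?thesis using n by (simp add: divide_simps)
qed

lemma lower_ratios_le:
  assumes k: "k \<in> small_gen" and n: "0 < n" and upper: "(k ^^ n) \<alpha> \<le> hpow m \<alpha>"
  shows "\<forall>s\<in>lower_ratios k. s \<le> real_of_int m / real n"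
  unfolding lower_ratios_def using lower_ratio_le_upper_ratio[OF k _ n _ upper] by blast

lemma hoelder_ge:
  assumes k: "k \<in> small_gen" and n: "0 < n" and lower: "hpow m \<alpha> \<le> (k ^^ n) \<alpha>"
  shows "real_of_int m / real n \<le> hoelder k"
proof -
  obtain m' where "(k ^^ 1) \<alpha> < hpow (m' + 1) \<alpha>" using hpow_bracket[OF k] by blast
  then have "bdd_above (lower_ratios k)"
    using lower_ratios_le[OF k, of 1 "m' + 1"] unfolding bdd_above_def by (meson less_imp_le zero_less_one)
  moreover have "real_of_int m / real n \<in> lower_ratios k"
    unfolding lower_ratios_def using n lower by blast
  ultimately show ?thesis unfolding hoelder_def by (rule cSup_upper[rotated])
qed

lemma hoelder_le:
  assumes k: "k \<in> small_gen" and n: "0 < n" and upper: "(k ^^ n) \<alpha> \<le> hpow m \<alpha>"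
  shows "hoelder k \<le> real_of_int m / real n"
proof -
  obtain m' where "hpow m' \<alpha> \<le> (k ^^ 1) \<alpha>" using hpow_bracket[OF k] by blast
  then have "real_of_int m' / real (1::nat) \<in> lower_ratios k" unfolding lower_ratios_def by blast
  then have "lower_ratios k \<noteq> {}" by blast
  then show ?thesis unfolding hoelder_def using lower_ratios_le[OF k n upper] cSup_least by blast
qed

lemma eq_0_if_abs_le_2_div:
  fixes x :: real
  assumes "\<And>n::nat. 0 < n \<Longrightarrow> \<bar>x\<bar> \<le> 2 / real n"
  shows "x = 0"
proof (rule ccontr)
  assume "x \<noteq> 0"
  then obtain n :: nat where n: "0 < n" "inverse (real n) < \<bar>x\<bar> / 2"
    using ex_inverse_of_nat_less[of "\<bar>x\<bar> / 2"] by auto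
  then show False using assms[OF n(1)] by (simp add: field_simps)
qed


lemma hoelder_add:
  assumes k: "k \<in> small_gen" and k': "k' \<in> small_gen"
  shows "hoelder (k \<circ> k') = hoelder k + hoelder k'"
proof -
  have kk': "k \<circ> k' \<in> small_gen" using small_gen_comp[OF k k'] .
  have "\<bar>hoelder (k \<circ> k') - (hoelder k + hoelder k')\<bar> \<le> 2 / real n" if n: "0 < n" for n
  proof -
    have funpow_comp: "((k \<circ> k') ^^ n) \<alpha> = (k ^^ n) ((k' ^^ n) \<alpha>)"
      using funpow_comp_commute[OF small_gen_commute[OF k k']] by simp
    obtain m where m: "hpow m \<alpha> \<le> (k ^^ n) \<alpha>" "(k ^^ n) \<alpha> < hpow (m + 1) \<alpha>"
      using hpow_bracket[OF k] .
    obtain m' where m': "hpow m' \<alpha> \<le> (k' ^^ n) \<alpha>" "(k' ^^ n) \<alpha> < hpow (m' + 1) \<alpha>"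
      using hpow_bracket[OF k'] .
    have "hpow m (hpow m' \<alpha>) \<le> (k ^^ n) ((k' ^^ n) \<alpha>)"
      using small_gen_comp_le[OF hpow_in_small_gen small_gen_funpow[OF k] hpow_in_small_gen
          small_gen_funpow[OF k'] m(1) m'(1)] .
    then have "hpow (m + m') \<alpha> \<le> ((k \<circ> k') ^^ n) \<alpha>" by (simp only: funpow_comp hpow_add)
    then have lower: "real_of_int (m + m') / real n \<le> hoelder (k \<circ> k')"
      using hoelder_ge[OF kk' n] by blast
    have "(k ^^ n) ((k' ^^ n) \<alpha>) \<le> hpow (m + 1) (hpow (m' + 1) \<alpha>)"
      using small_gen_comp_le[OF small_gen_funpow[OF k] hpow_in_small_gen small_gen_funpow[OF k']
          hpow_in_small_gen less_imp_le[OF m(2)] less_imp_le[OF m'(2)]] .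
    moreover have "m + 1 + (m' + 1) = m + m' + 2" by simp
    ultimately have "((k \<circ> k') ^^ n) \<alpha> \<le> hpow (m + m' + 2) \<alpha>"
      by (simp only: funpow_comp hpow_add[symmetric])
    then have upper: "hoelder (k \<circ> k') \<le> real_of_int (m + m' + 2) / real n"
      using hoelder_le[OF kk' n] by blast
    have "real_of_int m / real n \<le> hoelder k" "hoelder k \<le> real_of_int (m + 1) / real n"
      "real_of_int m' / real n \<le> hoelder k'" "hoelder k' \<le> real_of_int (m' + 1) / real n"
      using hoelder_ge[OF k n m(1)] hoelder_le[OF k n less_imp_le[OF m(2)]]
        hoelder_ge[OF k' n m'(1)] hoelder_le[OF k' n less_imp_le[OF m'(2)]] by auto
    then show ?thesis using lower upper by (simp add: add_divide_distrib abs_le_iff)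
  qed
  then show ?thesis using eq_0_if_abs_le_2_div[of "hoelder (k \<circ> k') - (hoelder k + hoelder k')"] by simp
qed


lemma hoelder_fixed:
  assumes k: "k \<in> small_gen" and fixed: "k \<alpha> = \<alpha>"
  shows "hoelder k = 0"
proof -
  have "(k ^^ 1) \<alpha> = hpow 0 \<alpha>" using fixed by (simp add: hpow_0)
  then show ?thesis
    using hoelder_ge[OF k, of 1 0] hoelder_le[OF k, of 1 0] by simp
qed

lemma hoelder_pos:
  assumes d: "d \<in> small_gen" and moves: "\<alpha> < d \<alpha>"
  shows "0 < hoelder d"
proof -
  obtain n where n: "h1 \<alpha> \<le> (d ^^ n) \<alpha>" using archimedean[OF d moves] .
  have "\<alpha> < h1 \<alpha>" using less_h1_on_J[OF orbit_hull_self] .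
  then have "0 < n" using n by (metis funpow_0 gr0I leD)
  then have "real_of_int 1 / real n \<le> hoelder d" using hoelder_ge[OF d, of n 1] n by (simp add: hpow_1)
  moreover have "0 < real_of_int 1 / real n" using \<open>0 < n\<close> by simp
  ultimately show ?thesis by linarith
qed

lemma hoelder_diff:
  assumes k: "k \<in> small_gen" and k': "k' \<in> small_gen"
  shows "inv k \<circ> k' \<in> small_gen" "hoelder k' = hoelder k + hoelder (inv k \<circ> k')"
proof -
  show d: "inv k \<circ> k' \<in> small_gen" using small_gen_comp[OF small_gen_inv[OF k] k'] .
  have "k \<circ> (inv k \<circ> k') = k'" using small_gen_in[OF k] by (simp add: fun_eq_iff)
  then show "hoelder k' = hoelder k + hoelder (inv k \<circ> k')" using hoelder_add[OF k d] by simp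
qed

lemma hoelder_less:
  assumes k: "k \<in> small_gen" and k': "k' \<in> small_gen" and less: "k \<alpha> < k' \<alpha>"
  shows "hoelder k < hoelder k'"
proof -
  have "\<alpha> < (inv k \<circ> k') \<alpha>"
    using less act_less_iff[OF small_gen_in[OF k], of \<alpha> "inv k (k' \<alpha>)"] small_gen_in[OF k] by simp
  then show ?thesis using hoelder_pos hoelder_diff[OF k k'] by force
qed

lemma hoelder_eq:
  assumes k: "k \<in> small_gen" and k': "k' \<in> small_gen" and eq: "k \<alpha> = k' \<alpha>"
  shows "hoelder k = hoelder k'"
proof -
  have "(inv k \<circ> k') \<alpha> = \<alpha>" using eq small_gen_in[OF k] by (metis comp_apply inv_apply)
  then show ?thesis using hoelder_fixed hoelder_diff[OF k k'] by force
qed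

text \<open>Coordinates on \<open>J\<close>: since \<open>small_gen\<close> acts regularly on \<open>J\<close>, each point is \<open>e \<alpha>\<close> for an
  element \<open>e\<close> whose Hoelder value does not depend on the choice.\<close>

definition rep :: "'a \<Rightarrow> 'a \<Rightarrow> 'a" where
  "rep y = (SOME e. e \<in> small_gen \<and> e \<alpha> = y)"

lemma rep_spec:
  assumes "y \<in> J"
  shows "rep y \<in> small_gen" "rep y \<alpha> = y"
proof -
  have "\<exists>e. e \<in> small_gen \<and> e \<alpha> = y" using small_gen_transitive_on_hull[OF assms] by metis
  then have "rep y \<in> small_gen \<and> rep y \<alpha> = y" unfolding rep_def by (rule someI_ex)
  then show "rep y \<in> small_gen" "rep y \<alpha> = y" by auto
qed

definition coord :: "'a \<Rightarrow> real" where
  "coord y = hoelder (rep y)"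

lemma coord_less_iff:
  assumes "y \<in> J" "w \<in> J"
  shows "y < w \<longleftrightarrow> coord y < coord w"
proof -
  have "coord y < coord w" if "y < w" "y \<in> J" "w \<in> J" for y w
    using hoelder_less[OF rep_spec(1)[OF that(2)] rep_spec(1)[OF that(3)]] that rep_spec(2) unfolding coord_def
    by simp
  from this[of y w] this[of w y] show ?thesis
    using assms by (cases y w rule: linorder_cases) auto
qed

lemma coord_apply:
  assumes e: "e \<in> small_gen" and y: "y \<in> J"
  shows "coord (e y) = hoelder e + coord y"
proof -
  have ey: "e y \<in> J" using small_gen_maps_J[OF e y] .
  have "hoelder (rep (e y)) = hoelder (e \<circ> rep y)"
    using hoelder_eq[OF rep_spec(1)[OF ey] small_gen_comp[OF e rep_spec(1)[OF y]]] rep_spec(2)[OF ey] rep_spec(2)[OF y]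
    by simp
  then show ?thesis unfolding coord_def using hoelder_add[OF e rep_spec(1)[OF y]] by simp
qed

lemma coord_alpha: "coord \<alpha> = 0"
  unfolding coord_def using hoelder_fixed rep_spec orbit_hull_self by blast

lemma coord_act:
  assumes g: "g \<in> G" "g ` J = J" and x: "x \<in> J"
  shows "coord (g x) = coord x + coord (g \<alpha>)"
proof -
  have "g \<alpha> \<in> J" using g orbit_hull_self by blast
  then have "g x = rep (g \<alpha>) x"
    using agree_on_J[OF g(1) small_gen_in[OF rep_spec(1)] orbit_hull_self _ x] rep_spec(2) by simp
  then show ?thesis
    using coord_apply[OF rep_spec(1)[OF \<open>g \<alpha> \<in> J\<close>] x] unfolding coord_def by simp
qed


lemma coord_image_subgroup:
  shows "0 \<in> coord ` J"
    and "a \<in> coord ` J \<Longrightarrow> b \<in> coord ` J \<Longrightarrow> a + b \<in> coord ` J"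
    and "a \<in> coord ` J \<Longrightarrow> - a \<in> coord ` J"
proof -
  show "0 \<in> coord ` J" using coord_alpha orbit_hull_self by force
next
  assume "a \<in> coord ` J" "b \<in> coord ` J"
  then obtain y w where yw: "y \<in> J" "w \<in> J" "a = coord y" "b = coord w" by blast
  then have "coord (rep y w) = a + b" using coord_apply[OF rep_spec(1)] unfolding coord_def by simp
  moreover have "rep y w \<in> J" using small_gen_maps_J[OF rep_spec(1)[OF yw(1)] yw(2)] .
  ultimately show "a + b \<in> coord ` J" by force
next
  assume "a \<in> coord ` J"
  then obtain y where y: "y \<in> J" "a = coord y" by blast
  define v where "v = inv (rep y) \<alpha>"
  have v: "v \<in> J" unfolding v_def using small_gen_maps_J[OF small_gen_inv[OF rep_spec(1)[OF y(1)]] orbit_hull_self] .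
  have "rep y v = \<alpha>" unfolding v_def using small_gen_in[OF rep_spec(1)[OF y(1)]] by simp
  then have "0 = a + coord v" using coord_apply[OF rep_spec(1)[OF y(1)] v] coord_alpha y(2) unfolding coord_def by simp
  then show "- a \<in> coord ` J" using v by force
qed

lemma piset_J: "piset G J = (\<lambda>x. {x}) ` J"
  using piset_minimal[OF J_in_Tset J_minimal] .

lemma induced_translation:
  assumes g: "g \<in> G" "g ` J = J" and shift: "\<And>x. x \<in> J \<Longrightarrow> coord (g x) = coord x + t"
  shows "\<forall>C\<in>piset G J. restrict (\<lambda>C. g ` C) (piset G J) C \<in> piset G J \<and>
           coord (the_elem (restrict (\<lambda>C. g ` C) (piset G J) C)) = coord (the_elem C) + t"
proof -
  have "{x} \<in> piset G J" "{g x} \<in> piset G J" if "x \<in> J" for x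
    using that g(2) unfolding piset_J by blast+
  then show ?thesis using shift unfolding piset_J by auto
qed

lemma type_I_J: "type_I (piset G J) set_less (induced_grp G J)"
proof -
  let ?P = "piset G J" and ?\<psi> = "\<lambda>C. coord (the_elem C)"
  have "strict_mono_on J coord" unfolding strict_mono_on_def using coord_less_iff by blast
  then have "inj_on coord J" by (rule strict_mono_on_imp_inj_on)
  then have "bij_betw ?\<psi> ?P (coord ` J)"
    unfolding piset_J by (auto simp: bij_betw_def inj_on_def image_image)
  moreover have "\<forall>C\<in>?P. \<forall>D\<in>?P. set_less C D \<longleftrightarrow> ?\<psi> C < ?\<psi> D"
    unfolding piset_J set_less_def using coord_less_iff by auto
  moreover have "\<exists>a\<in>coord ` J. \<forall>C\<in>?P. f C \<in> ?P \<and> ?\<psi> (f C) = ?\<psi> C + a"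
    if f: "f \<in> induced_grp G J" for f
  proof -
    obtain g where g: "f = restrict (\<lambda>C. g ` C) ?P" "g \<in> G" "g ` J = J"
      using f unfolding induced_grp_def stab_def by blast
    moreover have "coord (g \<alpha>) \<in> coord ` J" using g orbit_hull_self by blast
    ultimately show ?thesis using induced_translation[OF g(2,3)] coord_act[OF g(2,3)] by blast
  qed
  moreover have "\<exists>f\<in>induced_grp G J. \<forall>C\<in>?P. f C \<in> ?P \<and> ?\<psi> (f C) = ?\<psi> C + a"
    if a: "a \<in> coord ` J" for a
  proof -
    obtain w where w: "w \<in> J" "a = coord w" using a by blast
    have e: "rep w \<in> small_gen" "rep w ` J = J" using rep_spec(1)[OF w(1)] small_gen_image_J by blast+
    then have "restrict (\<lambda>C. rep w ` C) ?P \<in> induced_grp G J"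
      unfolding induced_grp_def stab_def using small_gen_in by blast
    moreover have "coord (rep w x) = coord x + a" if "x \<in> J" for x
      using coord_apply[OF e(1) that] w(2) unfolding coord_def by simp
    ultimately show ?thesis using induced_translation[OF small_gen_in[OF e(1)] e(2)] by blast
  qed
  ultimately show ?thesis
    unfolding type_I_def using coord_image_subgroup
    by (intro exI[of _ "coord ` J"] exI[of _ ?\<psi>] conjI) blast+
qed

end

lemma (in transitive_l_perm_group) minimal_type_I_if_commuting_neighbourhood:
  assumes "ample G" and "h1 \<in> G" "pw_le id h1" "h1 \<noteq> id"
    and "\<forall>a\<in>G. \<forall>b\<in>G. pw_le (pw_join (pw_abs a) (pw_abs b)) h1 \<longrightarrow> a \<circ> b = b \<circ> a"
  shows "\<exists>\<Delta>\<in>Tset G. (\<forall>\<Delta>'\<in>Tset G. \<not> \<Delta>' \<subset> \<Delta>) \<and> type_I (piset G \<Delta>) set_less (induced_grp G \<Delta>)"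
proof -
  obtain \<alpha> where "h1 \<alpha> \<noteq> \<alpha>" using assms(4) by (metis eq_id_iff)
  then interpret commuting_neighbourhood G h1 \<alpha>
    using assms by unfold_locales (auto simp: pw_le_def)
  show ?thesis using J_in_Tset J_minimal type_I_J by blast
qed

theorem lemma5p5:
  fixes G :: "('a::linorder \<Rightarrow> 'a) set"
  assumes "l_perm_group G" and "transitive_grp G" and "ample G"
  shows "(\<exists>\<Delta>\<in>Tset G. (\<forall>\<Delta>'\<in>Tset G. \<not> \<Delta>' \<subset> \<Delta>) \<and>
            type_I (piset G \<Delta>) set_less (induced_grp G \<Delta>))
     \<longleftrightarrow> (\<exists>h1\<in>G. pw_le id h1 \<and> h1 \<noteq> id \<and>
            (\<forall>a\<in>G. \<forall>b\<in>G. pw_le (pw_join (pw_abs a) (pw_abs b)) h1 \<longrightarrow> a \<circ> b = b \<circ> a))"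
proof -
  interpret transitive_l_perm_group G using assms(1,2) by unfold_locales
  show ?thesis
    using commuting_neighbourhood_if_type_I[OF assms(3)]
      minimal_type_I_if_commuting_neighbourhood[OF assms(3)] by blast
qed

end
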